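(* $20,21,22,23,24,25\notin\operatorname{Spec}(32_{65})$; that is, $\{20,21,22,23,24,25\}\cap\operatorname{Spec}(32_{65})=\emptyset$.
   Context: $32_{65}$ is the finite integral symmetric relation algebra with atoms $1'$, $a$, $b$, $c$, all symmetric, in which a diversity cycle $xyz$ (with $x,y,z\in\{a,b,c\}$) is mandatory (i.e. $x;y\ge z$) if it involves $a$ and forbidden (i.e. $x;y\cdot z=0$) otherwise. A representation over a set $U$ is an embedding into the full relation algebra on $U\times U$. $\operatorname{Spec}(A)$ is the set of cardinals $\alpha\le\omega$ such that $A$ has a representation over a set of cardinality $\alpha$. *)

theory Defs
  imports Main
begin

text \<open>The finite integral symmetric relation algebra 32_65, presented as the complex
  algebra of its atom structure: elements are sets of atoms.\<close>

datatype atom = Id' | Aa | Ba | Ca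

definition diversity :: "atom \<Rightarrow> bool" where
  "diversity x \<longleftrightarrow> x \<noteq> Id'"

text \<open>cycle x y z holds iff z \<le> x ; y for atoms x, y, z.\<close>
definition cycle :: "atom \<Rightarrow> atom \<Rightarrow> atom \<Rightarrow> bool" where
  "cycle x y z \<longleftrightarrow>
     (x = Id' \<and> y = z) \<or> (y = Id' \<and> x = z) \<or>
     (z = Id' \<and> x = y) \<or>
     (diversity x \<and> diversity y \<and> diversity z \<and> (x = Aa \<or> y = Aa \<or> z = Aa))"

definition ra_comp :: "atom set \<Rightarrow> atom set \<Rightarrow> atom set" where
  "ra_comp X Y = {z. \<exists>x\<in>X. \<exists>y\<in>Y. cycle x y z}"

text \<open>All atoms are symmetric, so converse is the identity.\<close>
definition ra_conv :: "atom set \<Rightarrow> atom set" where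
  "ra_conv X = X"

definition ra_one :: "atom set" where
  "ra_one = {Id'}"

definition representation :: "'u set \<Rightarrow> (atom set \<Rightarrow> ('u \<times> 'u) set) \<Rightarrow> bool" where
  "representation U h \<longleftrightarrow>
     inj h \<and>
     (\<forall>X Y. h (X \<union> Y) = h X \<union> h Y) \<and>
     (\<forall>X. h (- X) = (U \<times> U) - h X) \<and>
     (\<forall>X Y. h (ra_comp X Y) = h X O h Y) \<and>
     (\<forall>X. h (ra_conv X) = converse (h X)) \<and>
     h ra_one = Id_on U"

definition representable_over :: "'u set \<Rightarrow> bool" where
  "representable_over U \<longleftrightarrow> (\<exists>h. representation U h)"

end

theory Submission
  imports Defs
begin

text \<open>A representation colours the edges of the complete graph on \<open>U\<close> by the diversity
  atoms a, b, c, and the forbidden cycles say that the b- and c-edges together form a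
  triangle-free graph. Fix a point \<open>s\<close> with neighbourhoods \<open>A(s)\<close>, \<open>B(s)\<close>, \<open>C(s)\<close>.
  The mandatory cycles through a produce at least five points in \<open>B(s)\<close>, and by the
  symmetry between b and c at least five in \<open>C(s)\<close>, so every point has at least ten
  (b+c)-neighbours. For \<open>z \<in> B(s)\<close>, triangle-freeness puts all of them except \<open>s\<close> into
  \<open>A(s)\<close>, while each \<open>w \<in> A(s)\<close> is (b+c)-adjacent to at most \<open>|B(s)| - 2\<close> points of
  \<open>B(s)\<close>. Double counting the (b+c)-edges between \<open>B(s)\<close> and \<open>A(s)\<close> gives
  \<open>9 |B(s)| \<le> |A(s)| (|B(s)| - 2)\<close>, likewise for \<open>C(s)\<close>, and together with
  \<open>|U| = 1 + |A(s)| + |B(s)| + |C(s)|\<close> this forces \<open>|U| \<ge> 26\<close>.\<close>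

lemma card_filter_eq_sum:
  "finite A \<Longrightarrow> card {x\<in>A. P x} = (\<Sum>x\<in>A. if P x then 1 else 0)"
  by (subst card_eq_sum) (rule sum.inter_filter)

lemma sum_card_filter_swap:
  assumes "finite P" "finite R"
  shows "(\<Sum>z\<in>P. card {w\<in>R. r z w}) = (\<Sum>w\<in>R. card {z\<in>P. r z w})"
  using assms by (simp add: card_filter_eq_sum) (rule sum.swap)

lemma double_counting_bound:
  assumes "finite P" "finite R"
    and "\<And>z. z \<in> P \<Longrightarrow> a \<le> card {w\<in>R. r z w}"
    and "\<And>w. w \<in> R \<Longrightarrow> card {z\<in>P. r z w} \<le> b"
  shows "card P * a \<le> card R * b"
proof -
  have "card P * a \<le> (\<Sum>z\<in>P. card {w\<in>R. r z w})"
    using sum_bounded_below[of P a] assms(3) by simp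
  also have "\<dots> = (\<Sum>w\<in>R. card {z\<in>P. r z w})"
    using assms(1,2) by (rule sum_card_filter_swap)
  also have "\<dots> \<le> card R * b"
    using sum_bounded_above[of R _ b] assms(4) by simp
  finally show ?thesis .
qed

lemma double_count_arith:
  fixes b r :: nat
  assumes "5 \<le> b" "b * 9 \<le> r * (b - 2)"
  shows "25 \<le> 2 * b + r"
proof (cases "b \<le> 7")
  case True
  then have "b = 5 \<or> b = 6 \<or> b = 7" using assms(1) by auto
  then show ?thesis using assms(2) by auto
next
  case False
  have "10 \<le> r"
  proof (rule ccontr)
    assume "\<not> 10 \<le> r"
    then have "r * (b - 2) \<le> 9 * (b - 2)" by simp
    then show False using assms False by linarith
  qed
  then show ?thesis using False by linarith
qed

lemma UNIV_atom: "(UNIV :: atom set) = {Id', Aa, Ba, Ca}"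
  using atom.exhaust by auto

lemma representation_Un: "representation U h \<Longrightarrow> h (X \<union> Y) = h X \<union> h Y"
  unfolding representation_def by blast

lemma representation_mono:
  assumes "representation U h" "X \<subseteq> Y"
  shows "h X \<subseteq> h Y"
proof -
  have "h Y = h X \<union> h Y"
    using representation_Un[OF assms(1), of X Y] assms(2) by (simp add: sup.absorb2)
  then show ?thesis by blast
qed

lemma representation_disjoint:
  assumes "representation U h" "X \<inter> Y = {}"
  shows "h X \<inter> h Y = {}"
proof -
  have "h Y \<subseteq> h (- X)" using assms by (intro representation_mono) blast+
  also have "h (- X) = U \<times> U - h X" using assms(1) unfolding representation_def by blast
  finally show ?thesis by blast
qed

lemma representation_empty: "representation U h \<Longrightarrow> h {} = {}"
  using representation_disjoint[of U h "{}" "{}"] by simp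

lemma representation_UNIV: "representation U h \<Longrightarrow> h UNIV = U \<times> U"
  using representation_empty[of U h] unfolding representation_def
  by (metis Compl_empty_eq Diff_empty)

lemma representation_atom_witness:
  assumes "representation U h" "p \<in> h X"
  shows "\<exists>x\<in>X. p \<in> h {x}"
proof -
  have "finite X" by (rule finite_subset[OF subset_UNIV]) (simp add: UNIV_atom)
  then show ?thesis using assms(2)
  proof (induction X)
    case empty
    then show ?case using representation_empty[OF assms(1)] by simp
  next
    case (insert x X)
    then show ?case using representation_Un[OF assms(1), of "{x}" X] by auto
  qed
qed

lemma representation_Id: "representation U h \<Longrightarrow> h {Id'} = Id_on U"
  unfolding representation_def ra_one_def by blast

lemma representation_sym: "representation U h \<Longrightarrow> sym (h X)"
  unfolding representation_def ra_conv_def by (metis sym_conv_converse_eq)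

lemma representation_diversity:
  assumes "representation U h" "x \<noteq> Id'"
  shows "h {x} \<subseteq> U \<times> U - Id"
proof -
  have "h {x} \<subseteq> h UNIV" using assms(1) by (rule representation_mono) simp
  moreover have "h {x} \<inter> Id_on U = {}"
    using representation_disjoint[OF assms(1), of "{x}" "{Id'}"] assms
    by (simp add: representation_Id)
  ultimately show ?thesis using representation_UNIV[OF assms(1)] by auto
qed

lemma representation_comp_mono:
  "representation U h \<Longrightarrow> Z \<subseteq> ra_comp X Y \<Longrightarrow> h Z \<subseteq> h X O h Y"
  by (metis representation_def representation_mono)

lemma representation_comp_disjoint:
  "representation U h \<Longrightarrow> ra_comp X Y \<inter> Z = {} \<Longrightarrow> h X O h Y \<inter> h Z = {}"
  by (metis representation_def representation_disjoint)

text \<open>\<open>A\<close>, \<open>B\<close>, \<open>C\<close> play the images of the atoms a, b, c under a representation; of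
  the mandatory cycles only those used below are assumed.\<close>

locale colouring_32_65 =
  fixes U :: "'u set" and A B C :: "('u \<times> 'u) set"
  assumes finite_U: "finite U"
    and B_diversity: "B \<subseteq> U \<times> U - Id"
    and C_diversity: "C \<subseteq> U \<times> U - Id"
    and B_C_disjoint: "B \<inter> C = {}"
    and A_eq: "A = U \<times> U - Id - B - C"
    and sym_B: "sym B"
    and sym_C: "sym C"
    and triangle_free: "(B \<union> C) O (B \<union> C) \<inter> (B \<union> C) = {}"
    and Id_le_A_A: "Id_on U \<subseteq> A O A"
    and A_le_A_B: "A \<subseteq> A O B"
    and A_le_A_C: "A \<subseteq> A O C"
    and A_le_B_B: "A \<subseteq> B O B"
    and A_le_B_C: "A \<subseteq> B O C"
    and A_le_C_B: "A \<subseteq> C O B"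
    and A_le_C_C: "A \<subseteq> C O C"
begin

lemma swap_B_C: "colouring_32_65 U A C B"
proof
  show "A = U \<times> U - Id - C - B" using A_eq by blast
  show "(C \<union> B) O (C \<union> B) \<inter> (C \<union> B) = {}" using triangle_free by (simp add: Un_commute)
  show "C \<inter> B = {}" using B_C_disjoint by blast
qed (fact finite_U C_diversity B_diversity sym_C sym_B
       Id_le_A_A A_le_A_B A_le_A_C A_le_B_B A_le_B_C A_le_C_B A_le_C_C)+

lemma B_symD: "(u,v) \<in> B \<Longrightarrow> (v,u) \<in> B"
  using sym_B by (rule symD)

lemma C_symD: "(u,v) \<in> C \<Longrightarrow> (v,u) \<in> C"
  using sym_C by (rule symD)

lemma triangle_freeD: "(u,v) \<in> B \<union> C \<Longrightarrow> (v,w) \<in> B \<union> C \<Longrightarrow> (u,w) \<notin> B \<union> C"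
  using triangle_free by blast

lemma A_if_B_C_path:
  assumes "(u,v) \<in> B \<union> C" "(v,w) \<in> B \<union> C" "u \<noteq> w"
  shows "(u,w) \<in> A"
  using assms triangle_freeD[OF assms(1,2)] B_diversity C_diversity A_eq by blast

lemma finite_B_nbhd: "finite (B `` {s})"
  using B_diversity by (blast intro: finite_subset[OF _ finite_U])

lemma finite_A_nbhd: "finite (A `` {s})"
  using A_eq by (blast intro: finite_subset[OF _ finite_U])

lemma A_nbr_misses_two_B_nbrs:
  assumes "(s,w) \<in> A"
  obtains z z' where "z \<noteq> z'" "(s,z) \<in> B" "(s,z') \<in> B"
    "(w,z) \<notin> B \<union> C" "(w,z') \<notin> B \<union> C"
proof -
  obtain t where st: "(s,t) \<in> A" and tw: "(t,w) \<in> B" using assms A_le_A_B by blast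
  obtain z where sz: "(s,z) \<in> B" and zt: "(z,t) \<in> B" using st A_le_B_B by blast
  obtain z' where sz': "(s,z') \<in> B" and z't: "(z',t) \<in> C" using st A_le_B_C by blast
  have "(w,t) \<in> B \<union> C" using tw B_symD by blast
  then have "(w,z) \<notin> B \<union> C" "(w,z') \<notin> B \<union> C"
    using zt z't B_symD C_symD triangle_freeD by blast+
  moreover have "z \<noteq> z'" using zt z't B_C_disjoint by blast
  ultimately show ?thesis using that sz sz' by blast
qed

lemma A_nbr_with_two_C_nbrs_in_B_nbhd:
  assumes "s \<in> U"
  obtains u z z' where "(s,u) \<in> A" "z \<noteq> z'" "(s,z) \<in> B" "(s,z') \<in> B"
    "(u,z) \<in> C" "(u,z') \<in> C"
proof -
  obtain w where "(s,w) \<in> A" using assms Id_le_A_A by blast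
  then obtain z z' where sz: "(s,z) \<in> B" "(z,w) \<in> B" and sz': "(s,z') \<in> B" "(z',w) \<in> C"
    using A_le_B_B A_le_B_C by blast
  have "z \<noteq> z'" using sz sz' B_C_disjoint by blast
  then have "(z,z') \<in> A" using A_if_B_C_path sz sz' B_symD by blast
  then obtain u where zu: "(z,u) \<in> C" and uz': "(u,z') \<in> C" using A_le_C_C by blast
  have "s \<noteq> u" using sz zu B_C_disjoint C_symD by blast
  then have "(s,u) \<in> A" using A_if_B_C_path sz zu by blast
  then show ?thesis using that \<open>z \<noteq> z'\<close> sz sz' zu uz' C_symD by blast
qed

lemma card_B_nbhd_ge_5:
  assumes "s \<in> U"
  shows "5 \<le> card (B `` {s})"
proof -
  obtain u z z' where su: "(s,u) \<in> A" and "z \<noteq> z'" and z: "(s,z) \<in> B" "(u,z) \<in> C"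
    and z': "(s,z') \<in> B" "(u,z') \<in> C"
    using A_nbr_with_two_C_nbrs_in_B_nbhd[OF assms] .
  obtain y where y: "(s,y) \<in> B" "(y,u) \<in> B" using su A_le_B_B by blast
  obtain x x' where "x \<noteq> x'" and x: "(s,x) \<in> B" "(u,x) \<notin> B \<union> C"
    and x': "(s,x') \<in> B" "(u,x') \<notin> B \<union> C"
    using A_nbr_misses_two_B_nbrs[OF su] .
  \<comment> \<open>\<open>y\<close>, \<open>z\<close>, \<open>z'\<close> differ in the colour of their edge to \<open>u\<close>;
    \<open>x\<close>, \<open>x'\<close> have no b- or c-edge to \<open>u\<close>\<close>
  have "y \<noteq> z" "y \<noteq> z'" using y z z' B_C_disjoint B_symD by blast+
  moreover have "x \<noteq> y" "x \<noteq> z" "x \<noteq> z'" "x' \<noteq> y" "x' \<noteq> z" "x' \<noteq> z'"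
    using x x' y z z' B_symD by blast+
  ultimately have "card {x, x', y, z, z'} = 5" using \<open>z \<noteq> z'\<close> \<open>x \<noteq> x'\<close> by simp
  moreover have "{x, x', y, z, z'} \<subseteq> B `` {s}" using x x' y z z' by blast
  ultimately show ?thesis by (metis card_mono finite_B_nbhd)
qed

lemma card_B_C_nbhd_ge_10:
  assumes "s \<in> U"
  shows "10 \<le> card ((B \<union> C) `` {s})"
proof -
  have "B `` {s} \<inter> C `` {s} = {}" using B_C_disjoint by blast
  then have "card ((B \<union> C) `` {s}) = card (B `` {s}) + card (C `` {s})"
    unfolding Un_Image
    by (rule card_Un_disjoint[OF finite_B_nbhd colouring_32_65.finite_B_nbhd[OF swap_B_C]])
  then show ?thesis
    using card_B_nbhd_ge_5[OF assms] colouring_32_65.card_B_nbhd_ge_5[OF swap_B_C assms]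
    by linarith
qed

lemma B_nbhd_double_count:
  assumes "s \<in> U"
  shows "card (B `` {s}) * 9 \<le> card (A `` {s}) * (card (B `` {s}) - 2)"
proof (rule double_counting_bound[where r = "\<lambda>z w. (z,w) \<in> B \<union> C"])
  fix z assume "z \<in> B `` {s}"
  then have sz: "(s,z) \<in> B" and "z \<in> U" using B_diversity by blast+
  have fin: "finite {w \<in> A `` {s}. (z,w) \<in> B \<union> C}"
    using finite_A_nbhd by (rule finite_subset[rotated]) blast
  have "(B \<union> C) `` {z} \<subseteq> insert s {w \<in> A `` {s}. (z,w) \<in> B \<union> C}"
    using sz A_if_B_C_path by blast
  then have "card ((B \<union> C) `` {z}) \<le> card (insert s {w \<in> A `` {s}. (z,w) \<in> B \<union> C})"
    by (rule card_mono[OF finite.insertI[OF fin]])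
  also have "\<dots> \<le> Suc (card {w \<in> A `` {s}. (z,w) \<in> B \<union> C})"
    unfolding card_insert_if[OF fin] by simp
  finally show "9 \<le> card {w \<in> A `` {s}. (z,w) \<in> B \<union> C}"
    using card_B_C_nbhd_ge_10[OF \<open>z \<in> U\<close>] by linarith
next
  fix w assume "w \<in> A `` {s}"
  then obtain x x' where "x \<noteq> x'" "(s,x) \<in> B" "(s,x') \<in> B"
    "(w,x) \<notin> B \<union> C" "(w,x') \<notin> B \<union> C"
    using A_nbr_misses_two_B_nbrs by blast
  then have "{z \<in> B `` {s}. (z,w) \<in> B \<union> C} \<subseteq> B `` {s} - {x, x'}"
    and "card (B `` {s} - {x, x'}) = card (B `` {s}) - 2"
    using B_symD C_symD finite_B_nbhd by (auto simp: card_Diff_subset)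
  then show "card {z \<in> B `` {s}. (z,w) \<in> B \<union> C} \<le> card (B `` {s}) - 2"
    by (metis card_mono finite_B_nbhd finite_Diff)
qed (rule finite_B_nbhd finite_A_nbhd)+

lemma card_U_eq:
  assumes "s \<in> U"
  shows "card U = 1 + card (A `` {s}) + card (B `` {s}) + card (C `` {s})"
proof -
  have "U = insert s (A `` {s} \<union> B `` {s} \<union> C `` {s})"
    using assms A_eq B_diversity C_diversity by blast
  moreover have "s \<notin> A `` {s} \<union> B `` {s} \<union> C `` {s}"
    using A_eq B_diversity C_diversity by blast
  moreover have "A `` {s} \<inter> B `` {s} = {}" "A `` {s} \<inter> C `` {s} = {}"
    "B `` {s} \<inter> C `` {s} = {}"
    using A_eq B_C_disjoint by blast+
  ultimately show ?thesis
    using finite_A_nbhd finite_B_nbhd colouring_32_65.finite_B_nbhd[OF swap_B_C]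
    by (simp add: card_Un_disjoint Int_Un_distrib2)
qed

theorem card_ge_26:
  assumes "U \<noteq> {}"
  shows "26 \<le> card U"
proof -
  obtain s where s: "s \<in> U" using assms by blast
  have "25 \<le> 2 * card (B `` {s}) + card (A `` {s})"
    using card_B_nbhd_ge_5[OF s] B_nbhd_double_count[OF s] by (rule double_count_arith)
  moreover have "25 \<le> 2 * card (C `` {s}) + card (A `` {s})"
    using colouring_32_65.card_B_nbhd_ge_5[OF swap_B_C s]
      colouring_32_65.B_nbhd_double_count[OF swap_B_C s] by (rule double_count_arith)
  ultimately show ?thesis using card_U_eq[OF s] by linarith
qed

end

lemma representation_colouring_32_65:
  assumes rep: "representation U h" and "finite U"
  shows "colouring_32_65 U (h {Aa}) (h {Ba}) (h {Ca})"
proof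
  have mandatory: "h Z \<subseteq> h {x} O h {y}" if "Z \<subseteq> {z. cycle x y z}" for x y Z
    using that by (intro representation_comp_mono[OF rep]) (auto simp: ra_comp_def)
  show "finite U" by fact
  show "h {Ba} \<subseteq> U \<times> U - Id" "h {Ca} \<subseteq> U \<times> U - Id"
    using representation_diversity[OF rep] by simp_all
  show "h {Ba} \<inter> h {Ca} = {}" by (rule representation_disjoint[OF rep]) simp
  show "h {Aa} = U \<times> U - Id - h {Ba} - h {Ca}"
  proof
    show "h {Aa} \<subseteq> U \<times> U - Id - h {Ba} - h {Ca}"
      using representation_diversity[OF rep, of Aa]
        representation_disjoint[OF rep, of "{Aa}" "{Ba}"]
        representation_disjoint[OF rep, of "{Aa}" "{Ca}"] by auto
    show "U \<times> U - Id - h {Ba} - h {Ca} \<subseteq> h {Aa}"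
    proof
      fix p assume p: "p \<in> U \<times> U - Id - h {Ba} - h {Ca}"
      then obtain x where "p \<in> h {x}"
        using representation_atom_witness[OF rep] representation_UNIV[OF rep] by blast
      moreover have "x \<noteq> Id'" using p \<open>p \<in> h {x}\<close> representation_Id[OF rep] by auto
      ultimately show "p \<in> h {Aa}" using p by (cases x) auto
    qed
  qed
  show "sym (h {Ba})" "sym (h {Ca})" using representation_sym[OF rep] by blast+
  have "h {Ba, Ca} = h {Ba} \<union> h {Ca}"
    unfolding insert_is_Un[of Ba "{Ca}"] by (rule representation_Un[OF rep])
  moreover have "h {Ba, Ca} O h {Ba, Ca} \<inter> h {Ba, Ca} = {}"
    by (rule representation_comp_disjoint[OF rep]) (auto simp: ra_comp_def cycle_def diversity_def)
  ultimately show "(h {Ba} \<union> h {Ca}) O (h {Ba} \<union> h {Ca}) \<inter> (h {Ba} \<union> h {Ca}) = {}" by simp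
  show "Id_on U \<subseteq> h {Aa} O h {Aa}"
    using mandatory[of "{Id'}"] by (simp add: representation_Id[OF rep] cycle_def)
  show "h {Aa} \<subseteq> h {Aa} O h {Ba}" "h {Aa} \<subseteq> h {Aa} O h {Ca}"
    "h {Aa} \<subseteq> h {Ba} O h {Ba}" "h {Aa} \<subseteq> h {Ba} O h {Ca}"
    "h {Aa} \<subseteq> h {Ca} O h {Ba}" "h {Aa} \<subseteq> h {Ca} O h {Ca}"
    by (rule mandatory; simp add: cycle_def diversity_def)+
qed

theorem mainTheorem13:
  fixes U :: "'u set"
  assumes "finite U" and "card U \<in> {20, 21, 22, 23, 24, 25}"
  shows "\<not> representable_over U"
proof
  assume "representable_over U"
  then obtain h where "representation U h" unfolding representable_over_def by blast
  then have "colouring_32_65 U (h {Aa}) (h {Ba}) (h {Ca})"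
    using assms(1) by (rule representation_colouring_32_65)
  moreover have "U \<noteq> {}" using assms(2) by auto
  ultimately have "26 \<le> card U" by (rule colouring_32_65.card_ge_26)
  then show False using assms(2) by auto
qed

end
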